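(* Let $(G,w)$ be a weighted trigraph and let $(A,B,C)$ be a cut-partition of $G$. For each $X\in\{A,B\}$, let $G_X$ be a trigraph obtained from $G[X\cup C]$ by turning some (possibly none) of the strongly anti-adjacent pairs of $G[X\cup C]$ into semi-adjacent pairs (so that $w$ restricted to $D(G_X)$ is a weight function for $G_X$). For every $C'\subseteq C$ set $\alpha_{A\cup C'}=\alpha(\mathrm{Red}[G_A,w;A\cup C'])+\mathrm{Ext}[G_A,w;A\cup C']$. Let $k\in\mathbb N$ and let $w_B$ be a weight function for $G_B$ such that: $w_B(u)=w(u)$ for all $u\in B$; $w_B(u,v)=w(u,v)$, $w_B(v,u)=w(v,u)$ and $w_B(uv)=w(uv)$ for all $uv\in\binom{B\cup C}{2}\setminus\binom{C}{2}$; and $\llbracket S_C\rrbracket_{(G_B[C],w_B)}=\alpha_{A\cup S_C}-k$ for every $S_C\subseteq C$ that is a stable set of $G_B$. Then $\alpha(G,w)=k+\alpha(G_B,w_B)$.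
   Context: A trigraph $G$ consists of a finite vertex set $V(G)$ and an adjacency function $\theta_G:\binom{V(G)}{2}\to\{-1,0,1\}$; for distinct $u,v$ write $uv$ for $\{u,v\}$. The pair $uv$ is strongly adjacent if $\theta_G(uv)=1$, semi-adjacent if $\theta_G(uv)=0$, strongly anti-adjacent if $\theta_G(uv)=-1$; $u,v$ are anti-adjacent if $\theta_G(uv)\le 0$. A stable set is a set of pairwise anti-adjacent vertices. For $X\subseteq V(G)$, $G[X]$ is the trigraph on $X$ with the restricted adjacency function. $\mathbb N$ denotes the non-negative integers. For a trigraph $G$ let $D(G)=V(G)\cup\{(u,v):u,v\in V(G),u\neq v\}\cup\binom{V(G)}{2}$. A weight function for $G$ is a map $w:D(G)\to\mathbb N$ such that for all distinct $u,v$: if $uv$ is not semi-adjacent then $w(u,v)=w(v,u)=w(uv)=0$, and $w(u,v)\le w(uv)$. A weighted trigraph is a pair $(G,w)$ with $w$ a weight function for $G$; for $X\subseteq V(G)$, $(G[X],w)$ denotes $(G[X],w|_{D(G[X])})$. The weight of $S\subseteq V(G)$ is $\llbracket S\rrbracket_{(G,w)}=\sum_{u\in S}w(u)+\sum_{u\in S}\sum_{v\in V(G)\setminus S}w(u,v)+\sum_{uv\in\binom{V(G)\setminus S}{2}}w(uv)$, and $\alpha(G,w)=\max\{\llbracket S\rrbracket_{(G,w)}: S \text{ a stable set of } G\}$. For $R\subseteq V(G)$, the reduction $\mathrm{Red}[G,w;R]$ is the weighted trigraph $(G[R],w')$ where $w'(u)=\max\{w(u)-\sum_{v\in V(G)\setminus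 R}(w(uv)-w(u,v)),0\}$ for $u\in R$, and $w'(u,v)=w(u,v)$, $w'(uv)=w(uv)$ for distinct $u,v\in R$. The exterior weight is $\mathrm{Ext}[G,w;R]=\sum_{uv\in\binom{V(G)\setminus R}{2}}w(uv)+\sum_{u\in R}\sum_{v\in V(G)\setminus R}w(uv)$. A cut-partition of $G$ is a partition $(A,B,C)$ of $V(G)$ with $A,B$ non-empty ($C$ possibly empty) such that every vertex of $A$ is strongly anti-adjacent to every vertex of $B$. *)

theory Defs
  imports Main
begin

text \<open>A trigraph: a finite vertex set and an adjacency function on unordered pairs
  (2-element subsets of the vertex set); values outside the pairs are irrelevant.\<close>
record 'a trigraph =
  verts :: "'a set"
  adj :: "'a set \<Rightarrow> int"

text \<open>Weights on D(G): vertices, ordered pairs (u,v), unordered pairs {u,v}.\<close>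
record 'a wfun =
  wv :: "'a \<Rightarrow> nat"
  wo :: "'a \<Rightarrow> 'a \<Rightarrow> nat"
  wu :: "'a set \<Rightarrow> nat"

definition pairs :: "'a set \<Rightarrow> 'a set set" where
  "pairs X = {e. e \<subseteq> X \<and> card e = 2}"

definition trigraph :: "'a trigraph \<Rightarrow> bool" where
  "trigraph G \<longleftrightarrow> finite (verts G) \<and> (\<forall>e\<in>pairs (verts G). adj G e \<in> {-1, 0, 1})"

definition weight_fun :: "'a trigraph \<Rightarrow> 'a wfun \<Rightarrow> bool" where
  "weight_fun G w \<longleftrightarrow>
     (\<forall>u\<in>verts G. \<forall>v\<in>verts G. u \<noteq> v \<longrightarrow>
        ((adj G {u,v} \<noteq> 0 \<longrightarrow> wo w u v = 0 \<and> wo w v u = 0 \<and> wu w {u,v} = 0)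
         \<and> wo w u v \<le> wu w {u,v}))"

definition induced :: "'a trigraph \<Rightarrow> 'a set \<Rightarrow> 'a trigraph" where
  "induced G X = \<lparr>verts = X, adj = adj G\<rparr>"

definition stable :: "'a trigraph \<Rightarrow> 'a set \<Rightarrow> bool" where
  "stable G S \<longleftrightarrow> S \<subseteq> verts G \<and> (\<forall>u\<in>S. \<forall>v\<in>S. u \<noteq> v \<longrightarrow> adj G {u,v} \<le> 0)"

definition setweight :: "'a trigraph \<times> 'a wfun \<Rightarrow> 'a set \<Rightarrow> nat" where
  "setweight Gw S = (let G = fst Gw; w = snd Gw in
     (\<Sum>u\<in>S. wv w u) + (\<Sum>u\<in>S. \<Sum>v\<in>verts G - S. wo w u v)
     + (\<Sum>e\<in>pairs (verts G - S). wu w e))"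

definition alpha :: "'a trigraph \<times> 'a wfun \<Rightarrow> nat" where
  "alpha Gw = Max (setweight Gw ` {S. stable (fst Gw) S})"

definition red :: "'a trigraph \<Rightarrow> 'a wfun \<Rightarrow> 'a set \<Rightarrow> 'a trigraph \<times> 'a wfun" where
  "red G w R = (induced G R,
     w\<lparr>wv := (\<lambda>u. nat (max (int (wv w u)
        - (\<Sum>v\<in>verts G - R. int (wu w {u,v}) - int (wo w u v))) 0))\<rparr>)"

definition ext :: "'a trigraph \<Rightarrow> 'a wfun \<Rightarrow> 'a set \<Rightarrow> nat" where
  "ext G w R = (\<Sum>e\<in>pairs (verts G - R). wu w e) + (\<Sum>u\<in>R. \<Sum>v\<in>verts G - R. wu w {u,v})"

definition cut_partition :: "'a trigraph \<Rightarrow> 'a set \<Rightarrow> 'a set \<Rightarrow> 'a set \<Rightarrow> bool" where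
  "cut_partition G A B C \<longleftrightarrow>
     A \<union> B \<union> C = verts G \<and> A \<inter> B = {} \<and> A \<inter> C = {} \<and> B \<inter> C = {}
     \<and> A \<noteq> {} \<and> B \<noteq> {} \<and> (\<forall>a\<in>A. \<forall>b\<in>B. adj G {a,b} = -1)"

definition semi_extension :: "'a trigraph \<Rightarrow> 'a set \<Rightarrow> 'a trigraph \<Rightarrow> bool" where
  "semi_extension G X H \<longleftrightarrow> verts H = X \<and>
     (\<forall>e\<in>pairs X. adj H e = adj G e \<or> (adj G e = -1 \<and> adj H e = 0))"

definition alpha_sub :: "'a trigraph \<Rightarrow> 'a wfun \<Rightarrow> 'a set \<Rightarrow> nat" where
  "alpha_sub GA w R = alpha (red GA w R) + ext GA w R"

end

theory Submission
  imports Defs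
begin

text \<open>Since A and B are strongly anti-adjacent, the weight of a stable set S of G is the weight
  of S \<inter> (A \<union> C) in G_A plus a term depending only on S \<inter> C and S \<inter> B, the same term that
  completes the weight of S \<inter> C in G_B[C] to the weight of S \<inter> (B \<union> C) in G_B.
  The reduction Red[G_A,w;A \<union> C'] together with its exterior weight computes exactly the largest
  weight in G_A of a stable set inside A \<union> C', so by the hypothesis on w_B the A-side can be
  traded for k plus the weight of C' in G_B; this gives \<le>. For \<ge>, an optimal stable set of G_B
  is lifted to G by an optimal A-side for its C-part; the lifted set may use fewer vertices
  of C, which can only increase the cross term because w(u,v) \<le> w(uv).\<close>

lemma finite_pairs: "finite X \<Longrightarrow> finite (pairs X)"
  unfolding pairs_def by (rule finite_subset[of _ "Pow X"]) auto

lemma pairs_empty [simp]: "pairs {} = {}"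
  unfolding pairs_def by auto

lemma doubleton_in_pairs: "u \<noteq> v \<Longrightarrow> u \<in> X \<Longrightarrow> v \<in> X \<Longrightarrow> {u,v} \<in> pairs X"
  unfolding pairs_def by auto

lemma pairsE:
  assumes "e \<in> pairs X"
  obtains u v where "u \<noteq> v" "u \<in> X" "v \<in> X" "e = {u,v}"
  using assms unfolding pairs_def by (auto simp: card_2_iff)

lemma pairs_insert:
  assumes "u \<notin> X"
  shows "pairs (insert u X) = pairs X \<union> (\<lambda>v. {u,v}) ` X"
proof (intro equalityI subsetI)
  fix e assume "e \<in> pairs (insert u X)"
  then obtain a b where "a \<noteq> b" "a \<in> insert u X" "b \<in> insert u X" "e = {a,b}"
    by (rule pairsE)
  then show "e \<in> pairs X \<union> (\<lambda>v. {u,v}) ` X"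
    by (auto simp: insert_commute intro: doubleton_in_pairs)
next
  fix e assume "e \<in> pairs X \<union> (\<lambda>v. {u,v}) ` X"
  then show "e \<in> pairs (insert u X)"
    using assms unfolding pairs_def by (auto simp: card_insert_if)
qed

lemma sum_pairs_insert:
  assumes "finite X" "u \<notin> X"
  shows "(\<Sum>e\<in>pairs (insert u X). f e) = (\<Sum>e\<in>pairs X. f e) + (\<Sum>v\<in>X. f {u,v})"
proof -
  have "pairs X \<inter> (\<lambda>v. {u,v}) ` X = {}"
    using assms(2) unfolding pairs_def by auto
  moreover have "inj_on (\<lambda>v. {u,v}) X"
    using assms(2) by (auto simp: inj_on_def doubleton_eq_iff)
  ultimately show ?thesis
    using assms by (simp add: pairs_insert sum.union_disjoint finite_pairs sum.reindex)
qed

lemma sum_pairs_Un: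
  assumes "finite X" "finite Y" "X \<inter> Y = {}"
  shows "(\<Sum>e\<in>pairs (X \<union> Y). f e)
    = (\<Sum>e\<in>pairs X. f e) + (\<Sum>e\<in>pairs Y. f e) + (\<Sum>x\<in>X. \<Sum>y\<in>Y. f {x,y})"
  using assms
proof (induction X rule: finite_induct)
  case empty
  then show ?case by simp
next
  case (insert x X)
  have "(\<Sum>e\<in>pairs (insert x X \<union> Y). f e)
      = (\<Sum>e\<in>pairs (X \<union> Y). f e) + (\<Sum>v\<in>X. f {x,v}) + (\<Sum>v\<in>Y. f {x,v})"
    using insert by (simp add: sum_pairs_insert sum.union_disjoint add.assoc)
  then show ?case
    using insert by (simp add: sum_pairs_insert ac_simps)
qed

text \<open>What the vertices of Y contribute to the weight of SX \<union> SY in a trigraph on X \<union> Y,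
  beyond the weight of SX in the trigraph on X.\<close>
definition cross_weight :: "'a wfun \<Rightarrow> 'a set \<Rightarrow> 'a set \<Rightarrow> 'a set \<Rightarrow> 'a set \<Rightarrow> nat" where
  "cross_weight w X Y SX SY =
     (\<Sum>u\<in>SY. wv w u) + (\<Sum>u\<in>SY. \<Sum>v\<in>(X \<union> Y) - (SX \<union> SY). wo w u v)
     + (\<Sum>u\<in>SX. \<Sum>v\<in>Y - SY. wo w u v) + (\<Sum>e\<in>pairs (Y - SY). wu w e)
     + (\<Sum>x\<in>X - SX. \<Sum>y\<in>Y - SY. wu w {x,y})"

lemma setweight_eq:
  "setweight (G,w) S = (\<Sum>u\<in>S. wv w u) + (\<Sum>u\<in>S. \<Sum>v\<in>verts G - S. wo w u v)
     + (\<Sum>e\<in>pairs (verts G - S). wu w e)"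
  by (simp add: setweight_def)

lemma setweight_split:
  assumes "verts G = X \<union> Y" "verts H = X" "X \<inter> Y = {}" "finite X" "finite Y" "S \<subseteq> X \<union> Y"
  shows "setweight (G,w) S = setweight (H,w) (S \<inter> X) + cross_weight w X Y (S \<inter> X) (S \<inter> Y)"
proof -
  let ?SX = "S \<inter> X" and ?SY = "S \<inter> Y"
  have S: "S = ?SX \<union> ?SY"
    using assms(6) by auto
  have outside: "(X \<union> Y) - S = (X - ?SX) \<union> (Y - ?SY)"
    using assms(6) by auto
  have sum_S: "sum f S = sum f ?SX + sum f ?SY" for f :: "'a \<Rightarrow> nat"
    by (subst S, rule sum.union_disjoint) (use assms in auto)
  have sum_outside: "sum f ((X \<union> Y) - S) = sum f (X - ?SX) + sum f (Y - ?SY)" for f :: "'a \<Rightarrow> nat"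
    unfolding outside by (rule sum.union_disjoint) (use assms in auto)
  have pairs_outside: "(\<Sum>e\<in>pairs ((X \<union> Y) - S). wu w e) = (\<Sum>e\<in>pairs (X - ?SX). wu w e)
      + (\<Sum>e\<in>pairs (Y - ?SY). wu w e) + (\<Sum>x\<in>X - ?SX. \<Sum>y\<in>Y - ?SY. wu w {x,y})"
    unfolding outside by (rule sum_pairs_Un) (use assms in auto)
  have "(\<Sum>u\<in>S. \<Sum>v\<in>(X \<union> Y) - S. wo w u v)
      = (\<Sum>u\<in>?SX. \<Sum>v\<in>(X \<union> Y) - S. wo w u v) + (\<Sum>u\<in>?SY. \<Sum>v\<in>(X \<union> Y) - S. wo w u v)"
    by (rule sum_S)
  also have "(\<Sum>u\<in>?SX. \<Sum>v\<in>(X \<union> Y) - S. wo w u v)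
      = (\<Sum>u\<in>?SX. \<Sum>v\<in>X - ?SX. wo w u v) + (\<Sum>u\<in>?SX. \<Sum>v\<in>Y - ?SY. wo w u v)"
    by (simp add: sum_outside sum.distrib)
  finally show ?thesis
    unfolding setweight_eq assms(1,2) cross_weight_def pairs_outside sum_S[of "wv w"]
    by (simp flip: S)
qed

lemma cross_weight_drop_zero:
  assumes zero: "\<forall>a\<in>A. \<forall>b\<in>B. wo w a b = 0 \<and> wo w b a = 0 \<and> wu w {a,b} = 0"
    and "finite A" "finite B" "finite C" "A \<inter> B = {}" "A \<inter> C = {}"
    and SX: "SX \<subseteq> A \<union> C" and SY: "SY \<subseteq> B"
  shows "cross_weight w (A \<union> C) B SX SY = cross_weight w C B (SX \<inter> C) SY"
proof -
  have "(\<Sum>v\<in>(A \<union> C \<union> B) - (SX \<union> SY). wo w u v) = (\<Sum>v\<in>(C \<union> B) - (SX \<inter> C \<union> SY). wo w u v)"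
    if "u \<in> SY" for u
    by (rule sum.mono_neutral_right) (use assms that in auto)
  moreover have "(\<Sum>u\<in>SX. \<Sum>v\<in>B - SY. wo w u v) = (\<Sum>u\<in>SX \<inter> C. \<Sum>v\<in>B - SY. wo w u v)"
    by (rule sum.mono_neutral_right) (use assms in \<open>auto intro: finite_subset\<close>)
  moreover have "(\<Sum>x\<in>(A \<union> C) - SX. \<Sum>y\<in>B - SY. wu w {x,y})
      = (\<Sum>x\<in>C - SX \<inter> C. \<Sum>y\<in>B - SY. wu w {x,y})"
    by (rule sum.mono_neutral_right) (use assms in auto)
  ultimately show ?thesis
    unfolding cross_weight_def by simp
qed

lemma cross_weight_cong:
  assumes "\<forall>u\<in>Y. wv w' u = wv w u"
    and "\<forall>u\<in>X \<union> Y. \<forall>v\<in>Y. u \<noteq> v \<longrightarrow>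
           wo w' u v = wo w u v \<and> wo w' v u = wo w v u \<and> wu w' {u,v} = wu w {u,v}"
    and "X \<inter> Y = {}" "SX \<subseteq> X" "SY \<subseteq> Y"
  shows "cross_weight w' X Y SX SY = cross_weight w X Y SX SY"
proof -
  have same: "wo w' u v = wo w u v" "wo w' v u = wo w v u" "wu w' {u,v} = wu w {u,v}"
    if "u \<in> X \<union> Y" "v \<in> Y" "u \<noteq> v" for u v
    using assms(2) that by auto
  have "wu w' e = wu w e" if "e \<in> pairs (Y - SY)" for e
    using that by (elim pairsE) (auto simp: same)
  with assms(1,3-5) show ?thesis
    unfolding cross_weight_def by (intro arg_cong2[where f = "(+)"] sum.cong refl) (auto intro: same)
qed

lemma cross_weight_antimono:
  assumes "\<forall>x\<in>X. \<forall>y\<in>Y. wo w x y \<le> wu w {x,y}"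
    and "finite X" "finite Y" "SX \<subseteq> SX'" "SX' \<subseteq> X"
  shows "cross_weight w X Y SX' SY \<le> cross_weight w X Y SX SY"
proof -
  let ?out = "\<lambda>x. \<Sum>v\<in>Y - SY. wo w x v" and ?pair = "\<lambda>x. \<Sum>y\<in>Y - SY. wu w {x,y}"
  have as_if: "sum ?out Z + sum ?pair (X - Z) = (\<Sum>x\<in>X. if x \<in> Z then ?out x else ?pair x)"
    if "Z \<subseteq> X" for Z
    using that assms(2) by (simp add: sum.If_cases Int_absorb1 Diff_eq)
  have "?out x \<le> ?pair x" if "x \<in> X" for x
    using assms(1) that by (intro sum_mono) auto
  then have "(\<Sum>x\<in>X. if x \<in> SX' then ?out x else ?pair x) \<le> (\<Sum>x\<in>X. if x \<in> SX then ?out x else ?pair x)"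
    using assms(4) by (intro sum_mono) auto
  moreover have "(\<Sum>u\<in>SY. \<Sum>v\<in>(X \<union> Y) - (SX' \<union> SY). wo w u v)
      \<le> (\<Sum>u\<in>SY. \<Sum>v\<in>(X \<union> Y) - (SX \<union> SY). wo w u v)"
    using assms by (intro sum_mono sum_mono2) auto
  moreover have "SX \<subseteq> X"
    using assms(4,5) by blast
  ultimately show ?thesis
    using as_if[of SX] as_if[OF assms(5)] unfolding cross_weight_def by linarith
qed

lemma stable_subset: "stable G S \<Longrightarrow> S' \<subseteq> S \<Longrightarrow> stable G S'"
  unfolding stable_def by auto

lemma stable_induced_iff: "R \<subseteq> verts G \<Longrightarrow> stable (induced G R) T \<longleftrightarrow> T \<subseteq> R \<and> stable G T"
  unfolding stable_def induced_def by auto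

lemma verts_induced [simp]: "verts (induced G R) = R"
  by (simp add: induced_def)

lemma fst_red: "fst (red G w R) = induced G R"
  by (simp add: red_def)

lemma finite_stable_sets: "finite (verts G) \<Longrightarrow> finite {S. stable G S}"
  unfolding stable_def by (rule finite_subset[of _ "Pow (verts G)"]) auto

lemma setweight_le_alpha:
  "finite (verts (fst Gw)) \<Longrightarrow> stable (fst Gw) S \<Longrightarrow> setweight Gw S \<le> alpha Gw"
  unfolding alpha_def by (rule Max_ge) (auto intro: finite_stable_sets)

lemma alpha_attained:
  assumes "finite (verts (fst Gw))"
  obtains S where "stable (fst Gw) S" "alpha Gw = setweight Gw S"
proof -
  have "stable (fst Gw) {}"
    unfolding stable_def by auto
  then have "alpha Gw \<in> setweight Gw ` {S. stable (fst Gw) S}"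
    unfolding alpha_def using assms by (intro Max_in) (auto intro: finite_stable_sets)
  then show ?thesis
    using that by auto
qed

lemma weight_fun_wo_le_wu:
  "weight_fun G w \<Longrightarrow> u \<in> verts G \<Longrightarrow> v \<in> verts G \<Longrightarrow> u \<noteq> v \<Longrightarrow> wo w u v \<le> wu w {u,v}"
  unfolding weight_fun_def by blast

definition red_loss :: "'a trigraph \<Rightarrow> 'a wfun \<Rightarrow> 'a set \<Rightarrow> 'a \<Rightarrow> int" where
  "red_loss G w R u = (\<Sum>v\<in>verts G - R. int (wu w {u,v}) - int (wo w u v))"

lemma red_loss_eq:
  "red_loss G w R u = int (\<Sum>v\<in>verts G - R. wu w {u,v}) - int (\<Sum>v\<in>verts G - R. wo w u v)"
  unfolding red_loss_def by (simp add: sum_subtractf)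

lemma setweight_red:
  "setweight (red G w R) T = (\<Sum>u\<in>T. nat (max (int (wv w u) - red_loss G w R u) 0))
     + (\<Sum>u\<in>T. \<Sum>v\<in>R - T. wo w u v) + (\<Sum>e\<in>pairs (R - T). wu w e)"
  by (simp add: setweight_def red_def induced_def red_loss_def)

lemma setweight_red_plus_ext:
  assumes "finite (verts G)" "R \<subseteq> verts G" "T \<subseteq> R"
  shows "int (setweight (red G w R) T) + int (ext G w R)
    = int (setweight (G,w) T) + (\<Sum>u\<in>T. max 0 (red_loss G w R u - int (wv w u)))"
proof -
  let ?V = "verts G"
  have fin: "finite R" "finite T"
    using assms by (auto intro: finite_subset)
  have outside: "?V - T = (R - T) \<union> (?V - R)"
    using assms by auto
  have "(\<Sum>v\<in>?V - T. wo w u v) = (\<Sum>v\<in>R - T. wo w u v) + (\<Sum>v\<in>?V - R. wo w u v)" for u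
    unfolding outside by (rule sum.union_disjoint) (use assms fin in auto)
  then have out: "(\<Sum>u\<in>T. \<Sum>v\<in>?V - T. wo w u v)
      = (\<Sum>u\<in>T. \<Sum>v\<in>R - T. wo w u v) + (\<Sum>u\<in>T. \<Sum>v\<in>?V - R. wo w u v)"
    by (simp add: sum.distrib)
  have pairs: "(\<Sum>e\<in>pairs (?V - T). wu w e) = (\<Sum>e\<in>pairs (R - T). wu w e)
      + (\<Sum>e\<in>pairs (?V - R). wu w e) + (\<Sum>x\<in>R - T. \<Sum>y\<in>?V - R. wu w {x,y})"
    unfolding outside by (rule sum_pairs_Un) (use assms fin in auto)
  have ext: "(\<Sum>u\<in>R. \<Sum>v\<in>?V - R. wu w {u,v})
      = (\<Sum>u\<in>T. \<Sum>v\<in>?V - R. wu w {u,v}) + (\<Sum>u\<in>R - T. \<Sum>v\<in>?V - R. wu w {u,v})"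
    by (metis add.commute assms(3) fin(1) sum.subset_diff)
  have reduced: "int (nat (max (int (wv w u) - red_loss G w R u) 0))
      = int (wv w u) + int (\<Sum>v\<in>?V - R. wo w u v) - int (\<Sum>v\<in>?V - R. wu w {u,v})
        + max 0 (red_loss G w R u - int (wv w u))" for u
    unfolding red_loss_eq by simp
  have "int (\<Sum>u\<in>T. nat (max (int (wv w u) - red_loss G w R u) 0))
      = (\<Sum>u\<in>T. int (wv w u) + int (\<Sum>v\<in>?V - R. wo w u v) - int (\<Sum>v\<in>?V - R. wu w {u,v})
        + max 0 (red_loss G w R u - int (wv w u)))"
    by (simp only: of_nat_sum reduced)
  also have "\<dots> = int (\<Sum>u\<in>T. wv w u) + int (\<Sum>u\<in>T. \<Sum>v\<in>?V - R. wo w u v)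
      - int (\<Sum>u\<in>T. \<Sum>v\<in>?V - R. wu w {u,v}) + (\<Sum>u\<in>T. max 0 (red_loss G w R u - int (wv w u)))"
    by (simp only: sum.distrib sum_subtractf of_nat_sum)
  finally show ?thesis
    unfolding setweight_red setweight_eq ext_def out pairs ext by simp
qed

lemma setweight_le_alpha_sub:
  assumes "finite (verts G)" "R \<subseteq> verts G" "stable (induced G R) T"
  shows "setweight (G,w) T \<le> alpha_sub G w R"
proof -
  have "T \<subseteq> R" "finite R"
    using assms by (auto simp: stable_induced_iff intro: finite_subset)
  moreover have "setweight (red G w R) T \<le> alpha (red G w R)"
    using assms \<open>finite R\<close> by (intro setweight_le_alpha) (auto simp: fst_red)
  moreover have "(\<Sum>u\<in>T. max 0 (red_loss G w R u - int (wv w u))) \<ge> 0"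
    by (intro sum_nonneg) simp
  ultimately show ?thesis
    using setweight_red_plus_ext[OF assms(1,2), of T w] unfolding alpha_sub_def by linarith
qed

lemma setweight_remove_vertex:
  assumes "finite (verts G)" "T \<subseteq> verts G" "u \<in> T"
  shows "setweight (G,w) T + (\<Sum>v\<in>verts G - T. wu w {u,v})
    \<le> setweight (G,w) (T - {u}) + wv w u + (\<Sum>v\<in>verts G - T. wo w u v)"
proof -
  let ?V = "verts G"
  have fin: "finite T"
    using assms by (auto intro: finite_subset)
  have "(\<Sum>t\<in>T - {u}. \<Sum>v\<in>?V - T. wo w t v) \<le> (\<Sum>t\<in>T - {u}. \<Sum>v\<in>?V - (T - {u}). wo w t v)"
    using assms by (intro sum_mono sum_mono2) auto
  moreover have "?V - (T - {u}) = insert u (?V - T)"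
    using assms by auto
  then have "(\<Sum>e\<in>pairs (?V - (T - {u})). wu w e)
      = (\<Sum>e\<in>pairs (?V - T). wu w e) + (\<Sum>v\<in>?V - T. wu w {u,v})"
    using assms by (simp add: sum_pairs_insert)
  ultimately show ?thesis
    unfolding setweight_eq by (simp add: sum.remove[OF fin assms(3)])
qed

text \<open>Each removed vertex u gains at least red_loss u - wv u: the outside of T contains the
  outside of R, and wo \<le> wu on the extra pairs.\<close>
lemma setweight_remove_ge:
  assumes "finite (verts G)" "weight_fun G w" "T \<subseteq> R" "R \<subseteq> verts G" "U \<subseteq> T"
  shows "int (setweight (G,w) T) + (\<Sum>u\<in>U. red_loss G w R u - int (wv w u))
    \<le> int (setweight (G,w) (T - U))"
proof -
  have "finite U"
    using assms by (auto intro: finite_subset)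
  then show ?thesis
    using \<open>U \<subseteq> T\<close>
  proof (induction U rule: finite_induct)
    case empty
    then show ?case by simp
  next
    case (insert u U)
    let ?T = "T - U" and ?V = "verts G"
    have u: "u \<in> ?T" "?T \<subseteq> ?V"
      using insert assms by auto
    have "red_loss G w R u \<le> (\<Sum>v\<in>?V - ?T. int (wu w {u,v}) - int (wo w u v))"
      unfolding red_loss_def
    proof (rule sum_mono2)
      show "0 \<le> int (wu w {u,v}) - int (wo w u v)" if "v \<in> ?V - ?T - (?V - R)" for v
        using that u assms(2) by (auto dest: weight_fun_wo_le_wu)
    qed (use assms in auto)
    also have "\<dots> = int (\<Sum>v\<in>?V - ?T. wu w {u,v}) - int (\<Sum>v\<in>?V - ?T. wo w u v)"
      by (simp add: sum_subtractf)
    finally have "int (setweight (G,w) ?T) + (red_loss G w R u - int (wv w u))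
        \<le> int (setweight (G,w) (?T - {u}))"
      using setweight_remove_vertex[OF assms(1) u(2,1), of w] by linarith
    moreover have "T - insert u U = ?T - {u}"
      by auto
    ultimately show ?case
      using insert by simp
  qed
qed

lemma alpha_sub_attained:
  assumes "finite (verts G)" "weight_fun G w" "R \<subseteq> verts G"
  obtains T where "stable (induced G R) T" "alpha_sub G w R \<le> setweight (G,w) T"
proof -
  have "finite R"
    using assms by (auto intro: finite_subset)
  then obtain T0 where T0: "stable (induced G R) T0" "alpha (red G w R) = setweight (red G w R) T0"
    using alpha_attained[of "red G w R"] unfolding fst_red verts_induced by blast
  then have "T0 \<subseteq> R" "finite T0"
    using assms \<open>finite R\<close> by (auto simp: stable_induced_iff intro: finite_subset)
  \<comment> \<open>Dropping the vertices whose reduced weight was truncated removes the overcount.\<close>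
  define U where "U = {u\<in>T0. int (wv w u) < red_loss G w R u}"
  have "(\<Sum>u\<in>T0. max 0 (red_loss G w R u - int (wv w u))) = (\<Sum>u\<in>U. red_loss G w R u - int (wv w u))"
    unfolding U_def using \<open>finite T0\<close> by (auto simp: sum.inter_filter max_def intro!: sum.cong)
  then have "int (alpha_sub G w R) \<le> int (setweight (G,w) (T0 - U))"
    using setweight_red_plus_ext[OF assms(1,3) \<open>T0 \<subseteq> R\<close>, of w]
      setweight_remove_ge[OF assms(1,2) \<open>T0 \<subseteq> R\<close> assms(3), of U]
    unfolding alpha_sub_def T0(2) U_def by auto
  moreover have "stable (induced G R) (T0 - U)"
    using T0(1) by (rule stable_subset) auto
  ultimately show ?thesis
    using that by simp
qed

lemma semi_extension_anti_adjacent_iff: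
  assumes "semi_extension G X H" "u \<in> X" "v \<in> X" "u \<noteq> v"
  shows "adj H {u,v} \<le> 0 \<longleftrightarrow> adj G {u,v} \<le> 0"
  using assms doubleton_in_pairs[OF assms(4,2,3)] unfolding semi_extension_def by force

lemma stable_semi_extension_iff:
  assumes "semi_extension G X H" "X \<subseteq> verts G" "S \<subseteq> X"
  shows "stable H S \<longleftrightarrow> stable G S"
proof -
  have "verts H = X"
    using assms(1) unfolding semi_extension_def by simp
  moreover have "adj H {u,v} \<le> 0 \<longleftrightarrow> adj G {u,v} \<le> 0" if "u \<in> S" "v \<in> S" "u \<noteq> v" for u v
    using assms(3) that by (intro semi_extension_anti_adjacent_iff[OF assms(1)]) auto
  ultimately show ?thesis
    using assms(2,3) unfolding stable_def by auto
qed

lemma weight_fun_semi_extension: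
  assumes "weight_fun G w" "semi_extension G X H" "X \<subseteq> verts G"
  shows "weight_fun H w"
  unfolding weight_fun_def
proof (intro ballI impI)
  fix u v assume uv: "u \<in> verts H" "v \<in> verts H" "u \<noteq> v"
  then have "u \<in> verts G" "v \<in> verts G" "{u,v} \<in> pairs X"
    using assms(2,3) doubleton_in_pairs[OF uv(3)] unfolding semi_extension_def by auto
  moreover have "adj H {u,v} = adj G {u,v} \<or> adj H {u,v} = 0"
    using assms(2) \<open>{u,v} \<in> pairs X\<close> unfolding semi_extension_def by force
  ultimately show "(adj H {u,v} \<noteq> 0 \<longrightarrow> wo w u v = 0 \<and> wo w v u = 0 \<and> wu w {u,v} = 0)
      \<and> wo w u v \<le> wu w {u,v}"
    using assms(1) uv(3) unfolding weight_fun_def by metis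
qed

lemma cut_partition_weights_zero:
  assumes "weight_fun G w" "cut_partition G A B C" "a \<in> A" "b \<in> B"
  shows "wo w a b = 0 \<and> wo w b a = 0 \<and> wu w {a,b} = 0"
proof -
  have "a \<in> verts G" "b \<in> verts G" "a \<noteq> b" "adj G {a,b} \<noteq> 0"
    using assms(2-4) unfolding cut_partition_def by auto
  then show ?thesis
    using assms(1) unfolding weight_fun_def by blast
qed

lemma stable_Un_cut:
  assumes "cut_partition G A B C" "stable G T" "stable G S" "T - S \<subseteq> A" "S - T \<subseteq> B"
  shows "stable G (T \<union> S)"
proof -
  have cross: "adj G {u,v} \<le> 0" if "u \<in> T - S" "v \<in> S - T" for u v
  proof -
    have "u \<in> A" "v \<in> B"
      using assms(4,5) that by auto
    then show ?thesis
      using assms(1) unfolding cut_partition_def by simp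
  qed
  have "adj G {u,v} \<le> 0" if "u \<in> T \<union> S" "v \<in> T \<union> S" "u \<noteq> v" for u v
  proof (cases "u \<in> T \<and> v \<in> T \<or> u \<in> S \<and> v \<in> S")
    case True
    then show ?thesis
      using assms(2,3) that(3) unfolding stable_def by blast
  next
    case False
    then have "u \<in> T - S \<and> v \<in> S - T \<or> v \<in> T - S \<and> u \<in> S - T"
      using that(1,2) by blast
    then show ?thesis
      using cross by (metis insert_commute)
  qed
  then show ?thesis
    using assms(2,3) unfolding stable_def by blast
qed

locale cut_decomposition =
  fixes G GA GB :: "'a trigraph" and w wB :: "'a wfun" and A B C :: "'a set" and k :: nat
  assumes trigraph: "trigraph G" and weight_fun: "weight_fun G w"
    and cut: "cut_partition G A B C"
    and GA: "semi_extension G (A \<union> C) GA" and GB: "semi_extension G (B \<union> C) GB"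
    and wB_verts: "\<forall>u\<in>B. wv wB u = wv w u"
    and wB_pairs: "\<forall>u\<in>B \<union> C. \<forall>v\<in>B \<union> C. u \<noteq> v \<and> \<not> {u,v} \<subseteq> C \<longrightarrow>
           wo wB u v = wo w u v \<and> wo wB v u = wo w v u \<and> wu wB {u,v} = wu w {u,v}"
    and wB_C: "\<forall>SC. SC \<subseteq> C \<and> stable GB SC \<longrightarrow>
           int (setweight (induced GB C, wB) SC) = int (alpha_sub GA w (A \<union> SC)) - int k"
begin

lemma verts_G: "verts G = A \<union> B \<union> C"
  and disjoint: "A \<inter> B = {}" "A \<inter> C = {}" "B \<inter> C = {}"
  using cut unfolding cut_partition_def by auto

lemma finite_parts: "finite (verts G)" "finite A" "finite B" "finite C"
  using trigraph verts_G unfolding trigraph_def by auto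

lemma verts_GA: "verts GA = A \<union> C" and verts_GB: "verts GB = B \<union> C"
  using GA GB unfolding semi_extension_def by auto

lemma setweight_G_split:
  assumes "S \<subseteq> verts G"
  shows "setweight (G,w) S = setweight (GA,w) (S \<inter> (A \<union> C)) + cross_weight w C B (S \<inter> C) (S \<inter> B)"
proof -
  have "setweight (G,w) S
      = setweight (GA,w) (S \<inter> (A \<union> C)) + cross_weight w (A \<union> C) B (S \<inter> (A \<union> C)) (S \<inter> B)"
    using assms verts_G disjoint finite_parts verts_GA by (intro setweight_split) auto
  also have "cross_weight w (A \<union> C) B (S \<inter> (A \<union> C)) (S \<inter> B) = cross_weight w C B (S \<inter> C) (S \<inter> B)"
  proof -
    have "S \<inter> (A \<union> C) \<inter> C = S \<inter> C"
      by blast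
    then show ?thesis
      using cut_partition_weights_zero[OF weight_fun cut] disjoint finite_parts
      by (subst cross_weight_drop_zero) simp_all
  qed
  finally show ?thesis .
qed

lemma setweight_GB_split:
  assumes "S \<subseteq> B \<union> C"
  shows "setweight (GB,wB) S = setweight (induced GB C, wB) (S \<inter> C) + cross_weight w C B (S \<inter> C) (S \<inter> B)"
proof -
  have "setweight (GB,wB) S = setweight (induced GB C, wB) (S \<inter> C) + cross_weight wB C B (S \<inter> C) (S \<inter> B)"
    using assms disjoint finite_parts verts_GB by (intro setweight_split) auto
  also have "cross_weight wB C B (S \<inter> C) (S \<inter> B) = cross_weight w C B (S \<inter> C) (S \<inter> B)"
  proof (rule cross_weight_cong)
    show "\<forall>u\<in>C \<union> B. \<forall>v\<in>B. u \<noteq> v \<longrightarrow>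
        wo wB u v = wo w u v \<and> wo wB v u = wo w v u \<and> wu wB {u,v} = wu w {u,v}"
      using wB_pairs disjoint(3) by blast
  qed (use wB_verts disjoint(3) in auto)
  finally show ?thesis .
qed

lemma alpha_sub_eq:
  assumes "SC \<subseteq> C" "stable GB SC"
  shows "alpha_sub GA w (A \<union> SC) = k + setweight (induced GB C, wB) SC"
proof -
  have "int (setweight (induced GB C, wB) SC) = int (alpha_sub GA w (A \<union> SC)) - int k"
    using wB_C assms by blast
  then show ?thesis
    by linarith
qed

lemma stable_GA_iff: "S \<subseteq> A \<union> C \<Longrightarrow> stable GA S \<longleftrightarrow> stable G S"
  using verts_G by (intro stable_semi_extension_iff[OF GA]) auto

lemma stable_GB_iff: "S \<subseteq> B \<union> C \<Longrightarrow> stable GB S \<longleftrightarrow> stable G S"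
  using verts_G by (intro stable_semi_extension_iff[OF GB]) auto

lemma alpha_G_le: "alpha (G,w) \<le> k + alpha (GB,wB)"
proof -
  obtain S where S: "stable G S" "alpha (G,w) = setweight (G,w) S"
    using alpha_attained[of "(G,w)"] finite_parts(1) unfolding fst_conv by blast
  let ?SA = "S \<inter> (A \<union> C)" and ?SB = "S \<inter> (B \<union> C)" and ?SC = "S \<inter> C"
  have "stable GA ?SA" "stable GB ?SB"
    using S(1) by (simp_all add: stable_GA_iff stable_GB_iff stable_subset)
  have "stable GB ?SC"
    using \<open>stable GB ?SB\<close> by (rule stable_subset) auto
  have "alpha (G,w) = setweight (GA,w) ?SA + cross_weight w C B ?SC (S \<inter> B)"
    using S(1) setweight_G_split unfolding S(2) stable_def by blast
  also have "\<dots> \<le> alpha_sub GA w (A \<union> ?SC) + cross_weight w C B ?SC (S \<inter> B)"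
  proof -
    have "stable (induced GA (A \<union> ?SC)) ?SA"
      using \<open>stable GA ?SA\<close> verts_GA by (subst stable_induced_iff) auto
    then show ?thesis
      using finite_parts verts_GA by (intro add_right_mono setweight_le_alpha_sub) auto
  qed
  also have "\<dots> = k + setweight (GB,wB) ?SB"
    using \<open>stable GB ?SC\<close> setweight_GB_split[of ?SB]
    by (simp add: alpha_sub_eq Int_assoc Int_absorb2)
  also have "\<dots> \<le> k + alpha (GB,wB)"
    using \<open>stable GB ?SB\<close> finite_parts verts_GB by (simp add: setweight_le_alpha)
  finally show ?thesis .
qed

lemma stable_lift:
  assumes "stable GB S" "stable GA T" "T \<subseteq> A \<union> (S \<inter> C)"
  shows "stable G (T \<union> (S \<inter> B))"
proof -
  have "stable G T"
    using assms(2,3) stable_GA_iff[of T] by blast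
  have "stable GB (S \<inter> B \<union> T \<inter> C)"
    by (rule stable_subset[OF assms(1)]) (use assms(3) disjoint in auto)
  then have "stable G (S \<inter> B \<union> T \<inter> C)"
    using stable_GB_iff[of "S \<inter> B \<union> T \<inter> C"] by blast
  with \<open>stable G T\<close> have "stable G (T \<union> (S \<inter> B \<union> T \<inter> C))"
    by (rule stable_Un_cut[OF cut]) (use assms(3) in auto)
  moreover have "T \<union> (S \<inter> B \<union> T \<inter> C) = T \<union> (S \<inter> B)"
    by blast
  ultimately show ?thesis
    by simp
qed

lemma alpha_G_ge: "k + alpha (GB,wB) \<le> alpha (G,w)"
proof -
  have "finite (verts GB)"
    using finite_parts verts_GB by simp
  then obtain S where S: "stable GB S" "alpha (GB,wB) = setweight (GB,wB) S"
    using alpha_attained[of "(GB,wB)"] unfolding fst_conv by blast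
  let ?SC = "S \<inter> C" and ?SB = "S \<inter> B"
  have "S \<subseteq> B \<union> C"
    using S(1) verts_GB unfolding stable_def by blast
  have "stable GB ?SC"
    using S(1) by (rule stable_subset) auto
  have "A \<union> ?SC \<subseteq> verts GA" "weight_fun GA w"
    using verts_G verts_GA by (auto intro: weight_fun_semi_extension[OF weight_fun GA])
  then obtain T where T: "stable (induced GA (A \<union> ?SC)) T" "alpha_sub GA w (A \<union> ?SC) \<le> setweight (GA,w) T"
    using alpha_sub_attained[of GA w "A \<union> ?SC"] finite_parts verts_GA by auto
  then have "T \<subseteq> A \<union> ?SC" "stable GA T"
    using \<open>A \<union> ?SC \<subseteq> verts GA\<close> by (auto simp: stable_induced_iff)
  with S(1) have stable_T_SB: "stable G (T \<union> ?SB)"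
    by (intro stable_lift)
  have "k + alpha (GB,wB) = alpha_sub GA w (A \<union> ?SC) + cross_weight w C B ?SC ?SB"
    using \<open>S \<subseteq> B \<union> C\<close> \<open>stable GB ?SC\<close> by (simp add: S(2) setweight_GB_split alpha_sub_eq)
  also have "\<dots> \<le> setweight (GA,w) T + cross_weight w C B (T \<inter> C) ?SB"
  proof (intro add_mono T(2) cross_weight_antimono)
    show "\<forall>x\<in>C. \<forall>y\<in>B. wo w x y \<le> wu w {x,y}"
      using weight_fun disjoint verts_G by (auto intro: weight_fun_wo_le_wu)
  qed (use finite_parts \<open>T \<subseteq> A \<union> ?SC\<close> disjoint in auto)
  also have "\<dots> = setweight (G,w) (T \<union> ?SB)"
  proof -
    have "(T \<union> ?SB) \<inter> (A \<union> C) = T" "(T \<union> ?SB) \<inter> C = T \<inter> C" "(T \<union> ?SB) \<inter> B = ?SB"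
      using \<open>T \<subseteq> A \<union> ?SC\<close> disjoint by auto
    moreover have "T \<union> ?SB \<subseteq> verts G"
      using stable_T_SB unfolding stable_def by blast
    ultimately show ?thesis
      using setweight_G_split[of "T \<union> ?SB"] by simp
  qed
  also have "\<dots> \<le> alpha (G,w)"
    using stable_T_SB finite_parts by (simp add: setweight_le_alpha)
  finally show ?thesis .
qed

end

theorem proposition3p9:
  fixes G GA GB :: "'a trigraph" and w wB :: "'a wfun" and A B C :: "'a set" and k :: nat
  assumes "trigraph G" and "weight_fun G w" and "cut_partition G A B C"
    and "semi_extension G (A \<union> C) GA" and "semi_extension G (B \<union> C) GB"
    and "weight_fun GB wB"
    and "\<forall>u\<in>B. wv wB u = wv w u"
    and "\<forall>u\<in>B \<union> C. \<forall>v\<in>B \<union> C. u \<noteq> v \<and> \<not> {u,v} \<subseteq> C \<longrightarrow>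
           wo wB u v = wo w u v \<and> wo wB v u = wo w v u \<and> wu wB {u,v} = wu w {u,v}"
    and "\<forall>SC. SC \<subseteq> C \<and> stable GB SC \<longrightarrow>
           int (setweight (induced GB C, wB) SC) = int (alpha_sub GA w (A \<union> SC)) - int k"
  shows "alpha (G, w) = k + alpha (GB, wB)"
proof -
  interpret cut_decomposition G GA GB w wB A B C k
    using assms(1-5,7-9) by unfold_locales
  show ?thesis
    using alpha_G_le alpha_G_ge by simp
qed

end
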